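(* Let $(X_{s,t})$ be the INMA$(q_1,q_2)$ random field defined in the context with Poisson innovations $\varepsilon_{s,t}\sim\mathrm{Poi}(\mu_\varepsilon)$, $\mu_\varepsilon>0$, let $0\le k\le q_1$, $0\le l\le q_2$, $\rho(k,l)=\frac{1}{\beta_\bullet}\sum_{i=k}^{q_1}\sum_{j=l}^{q_2}p_{(i,j),(i-k,j-l)}$ and $m:=2\mu_\varepsilon\beta_\bullet(1-\rho(k,l))$. Then for every $j\in\mathbb{N}_0$, $$\mathbb{P}(X_{s,t}=X_{s-k,t-l}+j)=\mathbb{P}(X_{s,t}=X_{s-k,t-l}-j)=e^{-m}I_j(m),$$ where $I_j(z)=\sum_{r=0}^\infty (z/2)^{2r+j}/(r!\,(r+j)!)$ is the modified Bessel function of the first kind. Consequently $$\mathbb{P}(X_{s,t}<X_{s-k,t-l})=\mathbb{P}(X_{s,t}>X_{s-k,t-l})=\tfrac12\big[1-e^{-m}I_0(m)\big].$$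
   Context: INMA$(q_1,q_2)$ random field: Fix $q_1,q_2\in\mathbb{N}_0$ with $q_1+q_2\ge 1$ and parameters $\beta_{ij}\in[0,1]$ for $0\le i\le q_1$, $0\le j\le q_2$, not all zero; put $\beta_\bullet=\sum_{i=0}^{q_1}\sum_{j=0}^{q_2}\beta_{ij}$. Let $(\varepsilon_{s,t})_{s,t\in\mathbb{Z}}$ be i.i.d. random variables with values in $\mathbb{N}_0$. Let $\mathbf{Z}_{s,t;r}=(Z^{(i,j)}_{s,t;r})_{0\le i\le q_1,0\le j\le q_2}$, $s,t\in\mathbb{Z}$, $r\in\mathbb{N}$, be i.i.d. random vectors (distributed as a generic vector $\mathbf{Z}=(Z^{(i,j)})$), independent of $(\varepsilon_{s,t})$, whose components are Bernoulli with $\mathbb{P}(Z^{(i,j)}=1)=\beta_{ij}$; the components within one vector may be arbitrarily dependent. Write $p_{(i,j),(i',j')}:=\mathbb{P}(Z^{(i,j)}=1,\,Z^{(i',j')}=1)$. The field is $X_{s,t}=\sum_{i=0}^{q_1}\sum_{j=0}^{q_2}\sum_{r=1}^{\varepsilon_{s-i,t-j}}Z^{(i,j)}_{s-i,t-j;r}$. *)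

theory Defs
  imports "HOL-Probability.Probability"
begin

definition besselI :: "nat \<Rightarrow> real \<Rightarrow> real" where
  "besselI j z = (\<Sum>r. (z / 2) ^ (2 * r + j) / (fact r * fact (r + j)))"

text \<open>The INMA(q1,q2) field: eps (s,t) are the innovations,
  Z (s,t,r) (i,j) is the component Z^{(i,j)}_{s,t;r}.\<close>
definition inma_X ::
  "nat \<Rightarrow> nat \<Rightarrow> (int \<times> int \<Rightarrow> 'a \<Rightarrow> nat) \<Rightarrow> (int \<times> int \<times> nat \<Rightarrow> nat \<times> nat \<Rightarrow> 'a \<Rightarrow> nat)
   \<Rightarrow> int \<Rightarrow> int \<Rightarrow> 'a \<Rightarrow> nat" where
  "inma_X q1 q2 eps Z s t \<omega> =
     (\<Sum>i\<le>q1. \<Sum>j\<le>q2. \<Sum>r\<in>{1..eps (s - int i, t - int j) \<omega>}. Z (s - int i, t - int j, r) (i, j) \<omega>)"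

definition Zvec ::
  "nat \<Rightarrow> nat \<Rightarrow> (int \<times> int \<times> nat \<Rightarrow> nat \<times> nat \<Rightarrow> 'a \<Rightarrow> nat) \<Rightarrow> int \<times> int \<times> nat \<Rightarrow> 'a \<Rightarrow> (nat \<times> nat \<Rightarrow> nat)" where
  "Zvec q1 q2 Z str \<omega> = (\<lambda>ij\<in>{..q1} \<times> {..q2}. Z str ij \<omega>)"

text \<open>p_{(i,j),(i',j')} computed from the generic vector Z = Z_{0,0;1}
  (all vectors are identically distributed).\<close>
definition inma_p ::
  "'a measure \<Rightarrow> (int \<times> int \<times> nat \<Rightarrow> nat \<times> nat \<Rightarrow> 'a \<Rightarrow> nat) \<Rightarrow> nat \<times> nat \<Rightarrow> nat \<times> nat \<Rightarrow> real" where
  "inma_p M Z a b = measure M {\<omega> \<in> space M. Z (0, 0, 1) a \<omega> = 1 \<and> Z (0, 0, 1) b \<omega> = 1}"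

definition beta_bullet :: "nat \<Rightarrow> nat \<Rightarrow> (nat \<Rightarrow> nat \<Rightarrow> real) \<Rightarrow> real" where
  "beta_bullet q1 q2 \<beta> = (\<Sum>i\<le>q1. \<Sum>j\<le>q2. \<beta> i j)"

definition inma_rho ::
  "'a measure \<Rightarrow> nat \<Rightarrow> nat \<Rightarrow> (nat \<Rightarrow> nat \<Rightarrow> real) \<Rightarrow> (int \<times> int \<times> nat \<Rightarrow> nat \<times> nat \<Rightarrow> 'a \<Rightarrow> nat)
    \<Rightarrow> nat \<Rightarrow> nat \<Rightarrow> real" where
  "inma_rho M q1 q2 \<beta> Z k l =
     (1 / beta_bullet q1 q2 \<beta>) * (\<Sum>i\<in>{k..q1}. \<Sum>j\<in>{l..q2}. inma_p M Z (i, j) (i - k, j - l))"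

end

(*
  Both X(s,t) and X(s-k,t-l) are sums over the finitely many sites a of the union of their two
  windows: each of the Poisson(mu) many innovation events at a carries a thinning vector Z and
  contributes its (c - a)-component to X(c).  Classify every event by whether it counts towards
  X(s,t) only, towards X(s-k,t-l) only, or neither or both.  Poisson thinning (a Poisson number of
  i.i.d. trinomial trials splits into independent Poisson counts) and the additivity of independent
  Poisson variables make the totals A and B of the first two classes independent Poisson variables,
  both of mean mu beta(1 - rho(k,l)) = m/2, while the remaining events add the same amount C to
  both values.  So X(s,t) - X(s-k,t-l) = A - B is Skellam distributed:
  P(A = B + j) = sum_r e^(-m) (m/2)^(2r+j) / (r! (r+j)!) = e^(-m) I_j(m), and since (A,B) is
  exchangeable the two strict inequalities are equally likely, with total 1 - e^(-m) I_0(m).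
*)
theory Submission
  imports Defs "HOL-Library.Product_Plus"
begin

section \<open>Poisson laws\<close>

text \<open>The library's \<^const>\<open>poisson_pmf\<close> is only meaningful for a positive rate; rate \<open>0\<close>
  is needed here as well and is the point mass at \<open>0\<close>.\<close>
definition pois_pmf :: "real \<Rightarrow> nat pmf" where
  "pois_pmf r = (if r \<le> 0 then return_pmf 0 else poisson_pmf r)"

lemma pmf_pois_pmf:
  assumes "0 \<le> r"
  shows "pmf (pois_pmf r) n = r ^ n / fact n * exp (- r)"
proof (cases "r = 0")
  case True
  then show ?thesis by (cases n) (auto simp: pois_pmf_def indicator_def)
next
  case False
  with assms show ?thesis by (auto simp: pois_pmf_def)
qed

lemma pmf_bind_nat_sums:
  fixes P :: "nat pmf"
  shows "(\<lambda>n. pmf P n * pmf (F n) x) sums pmf (bind_pmf P F) x"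
proof -
  have "ennreal (pmf (bind_pmf P F) x) = (\<integral>\<^sup>+ n. ennreal (pmf P n) * ennreal (pmf (F n) x) \<partial>count_space UNIV)"
    unfolding ennreal_pmf_bind by (rule nn_integral_measure_pmf)
  also have "\<dots> = (\<Sum>n. ennreal (pmf P n * pmf (F n) x))"
    by (simp add: nn_integral_count_space_nat ennreal_mult)
  finally have sum_eq: "(\<Sum>n. ennreal (pmf P n * pmf (F n) x)) = ennreal (pmf (bind_pmf P F) x)" ..
  then have summable: "summable (\<lambda>n. pmf P n * pmf (F n) x)"
    by (intro summable_suminf_not_top) auto
  with sum_eq have "(\<Sum>n. pmf P n * pmf (F n) x) = pmf (bind_pmf P F) x"
    by (simp add: suminf_ennreal2 ennreal_inj suminf_nonneg)
  with summable_sums[OF summable] show ?thesis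
    by simp
qed

lemma map_pmf_pair_pmf_eq_bind:
  "map_pmf (\<lambda>(u, v). f u v) (pair_pmf A B) = bind_pmf A (\<lambda>u. map_pmf (f u) B)"
  by (simp add: pair_pmf_def map_bind_pmf map_pmf_def bind_assoc_pmf bind_return_pmf)

lemma map_add_pair_pois_pmf:
  assumes "0 \<le> a" "0 \<le> b"
  shows "map_pmf (\<lambda>(u, v). u + v) (pair_pmf (pois_pmf a) (pois_pmf b)) = pois_pmf (a + b)"
    (is "?L = ?R")
proof (rule pmf_eqI)
  fix n :: nat
  have preimage: "(\<lambda>(u, v). u + v) -` {n} = (\<lambda>i. (i, n - i)) ` {..n}"
    by (auto simp: image_iff intro!: exI[of _ "fst _"])
  have inj: "inj_on (\<lambda>i. (i, n - i)) {..n}"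
    by (auto simp: inj_on_def)
  have "pmf ?L n = (\<Sum>i\<le>n. pmf (pois_pmf a) i * pmf (pois_pmf b) (n - i))"
    unfolding pmf_map preimage
    by (subst measure_measure_pmf_finite) (auto simp: sum.reindex[OF inj] pmf_pair)
  also have "\<dots> = (\<Sum>i\<le>n. real (n choose i) * a ^ i * b ^ (n - i)) / fact n * exp (- (a + b))"
    unfolding sum_divide_distrib sum_distrib_right
    using assms by (intro sum.cong refl)
      (simp add: pmf_pois_pmf binomial_fact field_simps flip: exp_add)
  also have "\<dots> = pmf ?R n"
    using assms by (simp add: pmf_pois_pmf binomial_ring)
  finally show "pmf ?L n = pmf ?R n" .
qed

lemma pair_pmf_interchange:
  "map_pmf (\<lambda>((a, b), (c, d)). ((a, c), (b, d))) (pair_pmf (pair_pmf P1 Q1) (pair_pmf P2 Q2))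
     = pair_pmf (pair_pmf P1 P2) (pair_pmf Q1 Q2)" (is "?L = ?R")
proof (rule pmf_eqI)
  fix z :: "('a \<times> 'b) \<times> 'c \<times> 'd"
  obtain a b c d where z: "z = ((a, c), (b, d))"
    by (cases z) auto
  have "inj (\<lambda>((a, b), (c, d)). ((a, c), (b, d)))"
    by (auto simp: inj_def)
  from pmf_map_inj'[OF this, of _ "((a, b), (c, d))"] show "pmf ?L z = pmf ?R z"
    by (simp add: z pmf_pair)
qed

lemma map_add_pair_pair_pois_pmf:
  assumes "0 \<le> a1" "0 \<le> b1" "0 \<le> a2" "0 \<le> b2"
  shows "map_pmf (\<lambda>(x, y). x + y) (pair_pmf (pair_pmf (pois_pmf a1) (pois_pmf b1)) (pair_pmf (pois_pmf a2) (pois_pmf b2)))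
     = pair_pmf (pois_pmf (a1 + a2)) (pois_pmf (b1 + b2))"
proof -
  have "map_pmf (\<lambda>(x, y). x + y) (pair_pmf (pair_pmf (pois_pmf a1) (pois_pmf b1)) (pair_pmf (pois_pmf a2) (pois_pmf b2)))
     = map_pmf (\<lambda>(x, y). ((\<lambda>(u, v). u + v) x, (\<lambda>(u, v). u + v) y))
         (map_pmf (\<lambda>((a, b), (c, d)). ((a, c), (b, d)))
            (pair_pmf (pair_pmf (pois_pmf a1) (pois_pmf b1)) (pair_pmf (pois_pmf a2) (pois_pmf b2))))"
    unfolding map_pmf_comp by (intro map_pmf_cong refl) auto
  also have "\<dots> = pair_pmf (pois_pmf (a1 + a2)) (pois_pmf (b1 + b2))"
    unfolding pair_pmf_interchange map_pair map_add_pair_pois_pmf[OF assms(1,3)] map_add_pair_pois_pmf[OF assms(2,4)] ..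
  finally show ?thesis .
qed

lemma map_sum_Pi_pmf_pair_pois_pmf:
  fixes g :: "'i \<Rightarrow> 'c \<Rightarrow> nat \<times> nat"
  assumes "finite S"
    and "\<And>i. i \<in> S \<Longrightarrow> map_pmf (g i) (P i) = pair_pmf (pois_pmf (a i)) (pois_pmf (b i))"
    and "\<And>i. i \<in> S \<Longrightarrow> 0 \<le> a i \<and> 0 \<le> b i"
  shows "map_pmf (\<lambda>\<xi>. \<Sum>i\<in>S. g i (\<xi> i)) (Pi_pmf S d P)
           = pair_pmf (pois_pmf (\<Sum>i\<in>S. a i)) (pois_pmf (\<Sum>i\<in>S. b i))"
  using assms
proof (induction S rule: finite_induct)
  case empty
  then show ?case by (simp add: pois_pmf_def zero_prod_def)
next
  case (insert i S)
  have "map_pmf (\<lambda>\<xi>. \<Sum>j\<in>insert i S. g j (\<xi> j)) (Pi_pmf (insert i S) d P)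
     = map_pmf (\<lambda>(x, y). x + y) (map_pmf (\<lambda>(y, f). (g i y, \<Sum>j\<in>S. g j (f j))) (pair_pmf (P i) (Pi_pmf S d P)))"
    unfolding Pi_pmf_insert[OF insert(1,2)] map_pmf_comp
    using insert(1,2) by (intro map_pmf_cong refl) (auto intro!: sum.cong)
  also have "\<dots> = map_pmf (\<lambda>(x, y). x + y) (pair_pmf (pair_pmf (pois_pmf (a i)) (pois_pmf (b i)))
       (pair_pmf (pois_pmf (\<Sum>j\<in>S. a j)) (pois_pmf (\<Sum>j\<in>S. b j))))"
    unfolding map_pair using insert by simp
  also have "\<dots> = pair_pmf (pois_pmf (a i + (\<Sum>j\<in>S. a j))) (pois_pmf (b i + (\<Sum>j\<in>S. b j)))"
    using insert by (intro map_add_pair_pair_pois_pmf) (auto intro: sum_nonneg)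
  finally show ?case
    using insert(1,2) by simp
qed

section \<open>Poisson thinning\<close>

definition trinomial :: "real \<Rightarrow> real \<Rightarrow> real \<Rightarrow> nat \<Rightarrow> nat \<Rightarrow> nat \<Rightarrow> real" where
  "trinomial p q r n x y =
     (if x + y \<le> n then fact n / (fact x * fact y * fact (n - x - y)) * p ^ x * q ^ y * r ^ (n - x - y)
      else 0)"

lemma trinomial_Suc:
  "trinomial p q r (Suc n) x y =
     r * trinomial p q r n x y + (if 0 < x then p * trinomial p q r n (x - 1) y else 0)
       + (if 0 < y then q * trinomial p q r n x (y - 1) else 0)"
proof (cases "x + y \<le> Suc n")
  case False
  then show ?thesis by (auto simp: trinomial_def)
next
  case True
  define k where "k = Suc n - x - y"
  define c where "c = fact n / (fact x * fact y * fact k) * p ^ x * q ^ y * r ^ k"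
  have "trinomial p q r (Suc n) x y = (k + x + y) * c"
    using True by (simp add: trinomial_def c_def k_def)
  moreover have "r * trinomial p q r n x y = k * c"
  proof (cases k)
    case 0
    then show ?thesis by (simp add: trinomial_def k_def)
  next
    case (Suc k')
    then have "x + y \<le> n" "n - x - y = k'"
      by (auto simp: k_def)
    moreover have "fact k = real k * fact k'" "r ^ k = r * r ^ k'"
      using Suc by simp_all
    ultimately show ?thesis
      using Suc by (simp add: trinomial_def c_def mult_ac)
  qed
  moreover have "(if 0 < x then p * trinomial p q r n (x - 1) y else 0) = x * c"
  proof (cases x)
    case (Suc x')
    then have "x' + y \<le> n" "n - x' - y = k"
      using True by (auto simp: k_def)
    moreover have "fact x = real x * fact x'" "p ^ x = p * p ^ x'"
      using Suc by simp_all
    ultimately show ?thesis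
      using Suc by (simp add: trinomial_def c_def mult_ac)
  qed simp
  moreover have "(if 0 < y then q * trinomial p q r n x (y - 1) else 0) = y * c"
  proof (cases y)
    case (Suc y')
    then have "x + y' \<le> n" "n - x - y' = k"
      using True by (auto simp: k_def)
    moreover have "fact y = real y * fact y'" "q ^ y = q * q ^ y'"
      using Suc by simp_all
    ultimately show ?thesis
      using Suc by (simp add: trinomial_def c_def mult_ac)
  qed simp
  ultimately show ?thesis
    by (simp add: algebra_simps)
qed

lemma poisson_mixture_trinomial_sums:
  assumes "p + q + r = 1"
  shows "(\<lambda>n. \<mu> ^ n / fact n * exp (- \<mu>) * trinomial p q r n x y) sums
           ((\<mu> * p) ^ x / fact x * exp (- (\<mu> * p)) * ((\<mu> * q) ^ y / fact y * exp (- (\<mu> * q))))"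
proof -
  define K where "K = exp (- \<mu>) * (\<mu> * p) ^ x / fact x * ((\<mu> * q) ^ y / fact y)"
  have "(\<lambda>k. (\<mu> * r) ^ k / fact k) sums exp (\<mu> * r)"
    using exp_converges[of "\<mu> * r"] by (simp add: divide_inverse mult.commute)
  then have "(\<lambda>k. K * ((\<mu> * r) ^ k / fact k)) sums (K * exp (\<mu> * r))"
    by (rule sums_mult)
  moreover have "\<mu> ^ (k + (x + y)) / fact (k + (x + y)) * exp (- \<mu>) * trinomial p q r (k + (x + y)) x y
      = K * ((\<mu> * r) ^ k / fact k)" for k
  proof -
    have "trinomial p q r (k + (x + y)) x y = fact (k + (x + y)) / (fact x * fact y * fact k) * p ^ x * q ^ y * r ^ k"
      by (simp add: trinomial_def)
    moreover have "\<mu> ^ (k + (x + y)) = \<mu> ^ k * \<mu> ^ x * \<mu> ^ y"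
      by (simp add: power_add)
    ultimately show ?thesis
      by (simp add: K_def power_mult_distrib field_simps)
  qed
  ultimately have "(\<lambda>k. \<mu> ^ (k + (x + y)) / fact (k + (x + y)) * exp (- \<mu>) * trinomial p q r (k + (x + y)) x y)
      sums (K * exp (\<mu> * r))"
    by simp
  then have "(\<lambda>n. \<mu> ^ n / fact n * exp (- \<mu>) * trinomial p q r n x y) sums (K * exp (\<mu> * r))"
    by (subst (asm) sums_zero_iff_shift) (auto simp: trinomial_def)
  moreover have "\<mu> = \<mu> * p + \<mu> * q + \<mu> * r"
    using assms by (simp flip: distrib_left)
  then have "- \<mu> + \<mu> * r = - (\<mu> * p) + - (\<mu> * q)"
    by linarith
  then have "exp (- \<mu>) * exp (\<mu> * r) = exp (- (\<mu> * p)) * exp (- (\<mu> * q))"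
    by (simp flip: exp_add)
  ultimately show ?thesis
    by (simp add: K_def field_simps)
qed

lemma pmf_sum_Pi_pmf_trinomial:
  fixes W :: "(nat \<times> nat) pmf"
  assumes "set_pmf W \<subseteq> {(0, 0), (1, 0), (0, 1)}"
  shows "pmf (map_pmf (\<lambda>\<zeta>. \<Sum>i<n. \<zeta> i) (Pi_pmf {..<n} d (\<lambda>_. W))) (x, y)
           = trinomial (pmf W (1, 0)) (pmf W (0, 1)) (pmf W (0, 0)) n x y"
proof (induction n arbitrary: x y)
  case 0
  then show ?case by (auto simp: trinomial_def indicator_def zero_prod_def)
next
  case (Suc n)
  define T where "T = map_pmf (\<lambda>\<zeta>. \<Sum>i<n. \<zeta> i) (Pi_pmf {..<n} d (\<lambda>_. W))"
  have shift: "pmf (map_pmf ((+) a) T) (x, y) = (if fst a \<le> x \<and> snd a \<le> y then pmf T (x - fst a, y - snd a) else 0)"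
    for a :: "nat \<times> nat"
  proof (cases "fst a \<le> x \<and> snd a \<le> y")
    case True
    have "inj ((+) a)" by (auto simp: inj_def)
    from pmf_map_inj'[OF this, of T "(x - fst a, y - snd a)"] True show ?thesis
      by (cases a) simp
  qed (cases a, auto intro!: pmf_map_outside)
  have "map_pmf (\<lambda>\<zeta>. \<Sum>i<Suc n. \<zeta> i) (Pi_pmf {..<Suc n} d (\<lambda>_. W))
      = map_pmf (\<lambda>\<zeta>. \<Sum>i<Suc n. \<zeta> i) (map_pmf (\<lambda>(y, f). f(n := y)) (pair_pmf W (Pi_pmf {..<n} d (\<lambda>_. W))))"
    by (simp add: lessThan_Suc Pi_pmf_insert)
  also have "\<dots> = map_pmf (\<lambda>(y, f). y + (\<Sum>i<n. f i)) (pair_pmf W (Pi_pmf {..<n} d (\<lambda>_. W)))"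
    unfolding map_pmf_comp by (intro map_pmf_cong refl) (auto simp: add.commute)
  also have "\<dots> = map_pmf (\<lambda>(a, b). a + b) (pair_pmf W T)"
    unfolding T_def pair_map_pmf2 map_pmf_comp by (intro map_pmf_cong refl) auto
  also have "\<dots> = bind_pmf W (\<lambda>a. map_pmf ((+) a) T)"
    by (rule map_pmf_pair_pmf_eq_bind)
  finally have law: "map_pmf (\<lambda>\<zeta>. \<Sum>i<Suc n. \<zeta> i) (Pi_pmf {..<Suc n} d (\<lambda>_. W)) = \<dots>" .
  have "pmf (bind_pmf W (\<lambda>a. map_pmf ((+) a) T)) (x, y)
     = (\<Sum>a\<in>{(0, 0), (1, 0), (0, 1)}. pmf W a *\<^sub>R pmf (map_pmf ((+) a) T) (x, y))"
    unfolding pmf_bind by (rule integral_measure_pmf) (use assms in auto)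
  also have "\<dots> = pmf W (0, 0) * pmf T (x, y) + pmf W (1, 0) * (if 0 < x then pmf T (x - 1, y) else 0)
      + pmf W (0, 1) * (if 0 < y then pmf T (x, y - 1) else 0)"
    by (simp add: shift Suc_le_eq)
  also have "\<dots> = trinomial (pmf W (1, 0)) (pmf W (0, 1)) (pmf W (0, 0)) (Suc n) x y"
    unfolding trinomial_Suc Suc.IH[folded T_def, symmetric] by (simp add: mult.commute)
  finally show ?case
    unfolding law .
qed

lemma poisson_thinning:
  fixes W :: "(nat \<times> nat) pmf"
  assumes W: "set_pmf W \<subseteq> {(0, 0), (1, 0), (0, 1)}" and "0 < \<mu>"
  shows "bind_pmf (poisson_pmf \<mu>) (\<lambda>n. map_pmf (\<lambda>\<zeta>. \<Sum>i<n. \<zeta> i) (Pi_pmf {..<n} d (\<lambda>_. W)))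
           = pair_pmf (pois_pmf (\<mu> * pmf W (1, 0))) (pois_pmf (\<mu> * pmf W (0, 1)))"
proof (rule pmf_eqI)
  fix c :: "nat \<times> nat"
  obtain x y where c: "c = (x, y)"
    by (cases c)
  have "pmf W (1, 0) + pmf W (0, 1) + pmf W (0, 0) = 1"
    using sum_pmf_eq_1[OF _ W] by simp
  from poisson_mixture_trinomial_sums[OF this, of \<mu> x y]
    and pmf_bind_nat_sums[of "poisson_pmf \<mu>" "\<lambda>n. map_pmf (\<lambda>\<zeta>. \<Sum>i<n. \<zeta> i) (Pi_pmf {..<n} d (\<lambda>_. W))" "(x, y)"]
  show "pmf (bind_pmf (poisson_pmf \<mu>) (\<lambda>n. map_pmf (\<lambda>\<zeta>. \<Sum>i<n. \<zeta> i) (Pi_pmf {..<n} d (\<lambda>_. W)))) c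
      = pmf (pair_pmf (pois_pmf (\<mu> * pmf W (1, 0))) (pois_pmf (\<mu> * pmf W (0, 1)))) c"
    unfolding c pmf_pair using \<open>0 < \<mu>\<close>
    by (auto simp: pmf_pois_pmf pmf_sum_Pi_pmf_trinomial[OF W] dest: sums_unique2)
qed

section \<open>The difference of two independent Poisson variables\<close>

lemma prob_pair_pois_pmf_shift:
  assumes "0 \<le> a"
  shows "measure_pmf.prob (pair_pmf (pois_pmf a) (pois_pmf a)) {(u, v). u = v + j}
           = exp (- (2 * a)) * besselI j (2 * a)"
proof -
  define P where "P = pois_pmf a"
  define S where "S = measure_pmf.prob (pair_pmf P P) {(u, v). u = v + j}"
  define b where "b r = (2 * a / 2) ^ (2 * r + j) / (fact r * fact (r + j))" for r
  have inner: "pmf (map_pmf (\<lambda>v. u = v + j) P) True = (if j \<le> u then pmf P (u - j) else 0)" for u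
  proof -
    have "{v. u = v + j} = (if j \<le> u then {u - j} else {})"
      by auto
    then show ?thesis
      by (simp add: pmf_map vimage_def measure_pmf_single)
  qed
  have "S = pmf (map_pmf (\<lambda>(u, v). u = v + j) (pair_pmf P P)) True"
    by (simp add: S_def pmf_map vimage_def)
  also have "\<dots> = pmf (bind_pmf P (\<lambda>u. map_pmf (\<lambda>v. u = v + j) P)) True"
    by (simp only: map_pmf_pair_pmf_eq_bind)
  finally have "(\<lambda>u. pmf P u * (if j \<le> u then pmf P (u - j) else 0)) sums S"
    using pmf_bind_nat_sums[of P "\<lambda>u. map_pmf (\<lambda>v. u = v + j) P" True] by (simp add: inner)
  then have "(\<lambda>r. pmf P (r + j) * pmf P r) sums S"
    by (subst (asm) sums_zero_iff_shift[where n = j, symmetric]) (auto simp: mult.commute)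
  moreover have "pmf P (r + j) * pmf P r = exp (- (2 * a)) * b r" for r
  proof -
    have "2 * r + j = (r + j) + r"
      by simp
    then have "a ^ (2 * r + j) = a ^ (r + j) * a ^ r"
      by (simp only: power_add)
    then show ?thesis
      using assms by (simp add: P_def b_def pmf_pois_pmf mult_ac flip: exp_add)
  qed
  ultimately have "(\<lambda>r. exp (- (2 * a)) * b r) sums S"
    by simp
  from sums_divide[OF this, of "exp (- (2 * a))"] have "b sums (S / exp (- (2 * a)))"
    by simp
  then have "besselI j (2 * a) = S / exp (- (2 * a))"
    unfolding besselI_def b_def[symmetric] by (rule sums_unique[symmetric])
  then show ?thesis
    by (simp add: S_def P_def)
qed

lemma skellam_pair_pois_pmf:
  assumes "0 \<le> a"
  defines "\<Phi> \<equiv> pair_pmf (pois_pmf a) (pois_pmf a)" and "m \<equiv> 2 * a"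
  shows "measure_pmf.prob \<Phi> {(u, v). u = v + j} = exp (- m) * besselI j m"
    and "measure_pmf.prob \<Phi> {(u, v). u + j = v} = exp (- m) * besselI j m"
    and "measure_pmf.prob \<Phi> {(u, v). u < v} = (1 - exp (- m) * besselI 0 m) / 2"
    and "measure_pmf.prob \<Phi> {(u, v). v < u} = (1 - exp (- m) * besselI 0 m) / 2"
proof -
  have "\<Phi> = map_pmf (\<lambda>(x, y). (y, x)) \<Phi>"
    unfolding \<Phi>_def by (rule pair_commute_pmf)
  then have swap: "measure_pmf.prob \<Phi> A = measure_pmf.prob \<Phi> ((\<lambda>(x, y). (y, x)) -` A)" for A
    by (metis measure_map_pmf)
  show shift: "measure_pmf.prob \<Phi> {(u, v). u = v + j} = exp (- m) * besselI j m" for j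
    unfolding \<Phi>_def m_def by (rule prob_pair_pois_pmf_shift[OF assms(1)])
  have "(\<lambda>(x, y). (y, x)) -` {(u, v). u + j = v} = {(u, v). u = v + j}"
    by auto
  with swap shift show "measure_pmf.prob \<Phi> {(u, v). u + j = v} = exp (- m) * besselI j m"
    by metis
  have "(\<lambda>(x, y). (y, x)) -` {(u, v). u < v} = {(u, v). v < u}"
    by auto
  with swap have less_eq_greater: "measure_pmf.prob \<Phi> {(u, v). u < v} = measure_pmf.prob \<Phi> {(u, v). v < u}"
    by metis
  have "measure_pmf.prob \<Phi> ({(u, v). u < v} \<union> {(u, v). v < u} \<union> {(u, v). u = v + 0}) = 1"
    by (subst measure_pmf.prob_eq_1) auto
  also have "measure_pmf.prob \<Phi> ({(u, v). u < v} \<union> {(u, v). v < u} \<union> {(u, v). u = v + 0})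
     = measure_pmf.prob \<Phi> {(u, v). u < v} + measure_pmf.prob \<Phi> {(u, v). v < u}
       + measure_pmf.prob \<Phi> {(u, v). u = v + 0}"
    by (subst measure_pmf.finite_measure_Union; (subst measure_pmf.finite_measure_Union)?) auto
  finally show "measure_pmf.prob \<Phi> {(u, v). u < v} = (1 - exp (- m) * besselI 0 m) / 2"
    and "measure_pmf.prob \<Phi> {(u, v). v < u} = (1 - exp (- m) * besselI 0 m) / 2"
    using shift[of 0] less_eq_greater by simp_all
qed

lemma (in prob_space) prob_common_shock_skellam:
  fixes Y1 Y2 C :: "'a \<Rightarrow> nat" and D :: "'a \<Rightarrow> nat \<times> nat"
  assumes Y1: "\<And>\<omega>. Y1 \<omega> = fst (D \<omega>) + C \<omega>" and Y2: "\<And>\<omega>. Y2 \<omega> = snd (D \<omega>) + C \<omega>"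
    and law: "\<And>S. prob {\<omega> \<in> space M. D \<omega> \<in> S} = measure_pmf.prob (pair_pmf (pois_pmf a) (pois_pmf a)) S"
    and "0 \<le> a"
  defines "m \<equiv> 2 * a"
  shows "prob {\<omega> \<in> space M. Y1 \<omega> = Y2 \<omega> + j} = exp (- m) * besselI j m"
    and "prob {\<omega> \<in> space M. Y1 \<omega> + j = Y2 \<omega>} = exp (- m) * besselI j m"
    and "prob {\<omega> \<in> space M. Y1 \<omega> < Y2 \<omega>} = (1 - exp (- m) * besselI 0 m) / 2"
    and "prob {\<omega> \<in> space M. Y1 \<omega> > Y2 \<omega>} = (1 - exp (- m) * besselI 0 m) / 2"
proof -
  have event: "{\<omega> \<in> space M. R (Y1 \<omega>) (Y2 \<omega>)} = {\<omega> \<in> space M. D \<omega> \<in> {(u, v). R u v}}"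
    if "\<And>u v c. R (u + c) (v + c) = R u v" for R :: "nat \<Rightarrow> nat \<Rightarrow> bool"
    using that by (simp add: Y1 Y2 case_prod_unfold)
  note skellam = skellam_pair_pois_pmf[OF \<open>0 \<le> a\<close>, folded m_def]
  show "prob {\<omega> \<in> space M. Y1 \<omega> = Y2 \<omega> + j} = exp (- m) * besselI j m"
    by (subst event) (simp, simp only: law skellam)
  show "prob {\<omega> \<in> space M. Y1 \<omega> + j = Y2 \<omega>} = exp (- m) * besselI j m"
    by (subst event) (simp, simp only: law skellam)
  show "prob {\<omega> \<in> space M. Y1 \<omega> < Y2 \<omega>} = (1 - exp (- m) * besselI 0 m) / 2"
    by (subst event) (simp, simp only: law skellam)
  show "prob {\<omega> \<in> space M. Y1 \<omega> > Y2 \<omega>} = (1 - exp (- m) * besselI 0 m) / 2"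
    by (subst event) (simp, simp only: law skellam)
qed

lemma pmf_map_excess_pair:
  fixes u v :: "'a \<Rightarrow> nat"
  assumes "\<And>z. z \<in> set_pmf \<nu> \<Longrightarrow> u z \<le> 1 \<and> v z \<le> 1"
  defines "e \<equiv> \<lambda>z. (u z - min (u z) (v z), v z - min (u z) (v z))"
  shows "pmf (map_pmf e \<nu>) (1, 0) = measure_pmf.prob \<nu> {z. u z = 1} - measure_pmf.prob \<nu> {z. u z = 1 \<and> v z = 1}"
    and "pmf (map_pmf e \<nu>) (0, 1) = measure_pmf.prob \<nu> {z. v z = 1} - measure_pmf.prob \<nu> {z. u z = 1 \<and> v z = 1}"
proof -
  have on_support: "measure_pmf.prob \<nu> A = measure_pmf.prob \<nu> B" if "A \<inter> set_pmf \<nu> = B \<inter> set_pmf \<nu>" for A B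
    by (metis that measure_Int_set_pmf)
  have "pmf (map_pmf e \<nu>) (1, 0) = measure_pmf.prob \<nu> ({z. u z = 1} - {z. u z = 1 \<and> v z = 1})"
    unfolding pmf_map using assms by (intro on_support) (fastforce simp: e_def)
  then show "pmf (map_pmf e \<nu>) (1, 0) = measure_pmf.prob \<nu> {z. u z = 1} - measure_pmf.prob \<nu> {z. u z = 1 \<and> v z = 1}"
    by (subst (asm) measure_pmf.finite_measure_Diff) (auto simp: Int_absorb1)
  have "pmf (map_pmf e \<nu>) (0, 1) = measure_pmf.prob \<nu> ({z. v z = 1} - {z. u z = 1 \<and> v z = 1})"
    unfolding pmf_map using assms by (intro on_support) (fastforce simp: e_def)
  then show "pmf (map_pmf e \<nu>) (0, 1) = measure_pmf.prob \<nu> {z. v z = 1} - measure_pmf.prob \<nu> {z. u z = 1 \<and> v z = 1}"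
    by (subst (asm) measure_pmf.finite_measure_Diff) (auto simp: Int_absorb1)
qed

definition window :: "nat \<Rightarrow> nat \<Rightarrow> int \<times> int \<Rightarrow> (int \<times> int) set" where
  "window q1 q2 c = (\<lambda>(i, j). (fst c - int i, snd c - int j)) ` ({..q1} \<times> {..q2})"

text \<open>The contribution to \<open>X\<^sub>c\<close> of an event at site \<open>a\<close> with thinning vector \<open>z\<close>.\<close>
definition window_weight :: "nat \<Rightarrow> nat \<Rightarrow> int \<times> int \<Rightarrow> int \<times> int \<Rightarrow> (nat \<times> nat \<Rightarrow> nat) \<Rightarrow> nat" where
  "window_weight q1 q2 c a z =
     (if a \<in> window q1 q2 c then z (nat (fst c - fst a), nat (snd c - snd a)) else 0)"

lemma finite_window: "finite (window q1 q2 c)"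
  by (simp add: window_def)

lemma mem_window_iff:
  "a \<in> window q1 q2 c \<longleftrightarrow> fst a \<le> fst c \<and> fst c - fst a \<le> q1 \<and> snd a \<le> snd c \<and> snd c - snd a \<le> q2"
proof
  assume "fst a \<le> fst c \<and> fst c - fst a \<le> q1 \<and> snd a \<le> snd c \<and> snd c - snd a \<le> q2"
  then show "a \<in> window q1 q2 c"
    unfolding window_def image_iff
    by (intro bexI[of _ "(nat (fst c - fst a), nat (snd c - snd a))"]) (auto simp: prod_eq_iff)
qed (auto simp: window_def)

lemma window_weight_outside: "a \<notin> window q1 q2 c \<Longrightarrow> window_weight q1 q2 c a = (\<lambda>_. 0)"
  by (simp add: window_weight_def fun_eq_iff)

lemma window_weight_at:
  assumes "i \<le> q1" "j \<le> q2"
  shows "window_weight q1 q2 c (fst c - int i, snd c - int j) = (\<lambda>z. z (i, j))"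
  using assms by (simp add: window_weight_def mem_window_iff fun_eq_iff)

lemma window_weight_shift:
  assumes "i \<le> q1" "j \<le> q2"
  shows "window_weight q1 q2 (fst c - int k, snd c - int l) (fst c - int i, snd c - int j)
           = (if k \<le> i \<and> l \<le> j then (\<lambda>z. z (i - k, j - l)) else (\<lambda>_. 0))"
  using assms by (auto simp: window_weight_def mem_window_iff nat_diff_distrib)

lemma sum_window_weight:
  fixes h :: "int \<times> int \<Rightarrow> ((nat \<times> nat \<Rightarrow> nat) \<Rightarrow> nat) \<Rightarrow> 'b::comm_monoid_add"
  assumes "finite Pos" "window q1 q2 c \<subseteq> Pos" "\<And>a. h a (\<lambda>_. 0) = 0"
  shows "(\<Sum>a\<in>Pos. h a (window_weight q1 q2 c a))
           = (\<Sum>(i, j)\<in>{..q1} \<times> {..q2}. h (fst c - int i, snd c - int j) (\<lambda>z. z (i, j)))"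
proof -
  have "(\<Sum>a\<in>Pos. h a (window_weight q1 q2 c a)) = (\<Sum>a\<in>window q1 q2 c. h a (window_weight q1 q2 c a))"
    using assms by (intro sum.mono_neutral_right) (auto simp: window_weight_outside)
  also have "\<dots> = (\<Sum>(i, j)\<in>{..q1} \<times> {..q2}. h (fst c - int i, snd c - int j) (\<lambda>z. z (i, j)))"
    unfolding window_def
    by (rule sum.reindex_cong[where l = "\<lambda>(i, j). (fst c - int i, snd c - int j)"])
      (auto simp: inj_on_def window_weight_at)
  finally show ?thesis .
qed

section \<open>The innovation model\<close>

locale inma_model = prob_space M
  for M :: "'a measure" and q1 q2 :: nat and \<mu> :: real
    and eps :: "int \<times> int \<Rightarrow> 'a \<Rightarrow> nat"
    and Z :: "int \<times> int \<times> nat \<Rightarrow> nat \<times> nat \<Rightarrow> 'a \<Rightarrow> nat" +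
  assumes mu_pos: "\<mu> > 0"
    and eps_indep: "indep_vars (\<lambda>_. count_space UNIV) eps UNIV"
    and eps_poisson: "\<And>st. distr M (count_space UNIV) (eps st) = measure_pmf (poisson_pmf \<mu>)"
    and Z_01: "\<And>str ij \<omega>. \<omega> \<in> space M \<Longrightarrow> Z str ij \<omega> \<le> 1"
    and Z_indep: "indep_vars (\<lambda>_. PiM ({..q1} \<times> {..q2}) (\<lambda>_. count_space UNIV))
                    (Zvec q1 q2 Z) (UNIV \<times> UNIV \<times> {1..})"
    and Z_ident: "\<And>s' t' r. r \<ge> 1 \<Longrightarrow>
                    distr M (PiM ({..q1} \<times> {..q2}) (\<lambda>_. count_space UNIV)) (Zvec q1 q2 Z (s', t', r))
                  = distr M (PiM ({..q1} \<times> {..q2}) (\<lambda>_. count_space UNIV)) (Zvec q1 q2 Z (0, 0, 1))"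
    and eps_Z_indep: "indep_set
                    (sets (vimage_algebra (space M) (\<lambda>\<omega> st. eps st \<omega>)
                       (PiM UNIV (\<lambda>_. count_space UNIV))))
                    (sets (vimage_algebra (space M) (\<lambda>\<omega>. \<lambda>str\<in>UNIV \<times> UNIV \<times> {1..}. Zvec q1 q2 Z str \<omega>)
                       (PiM (UNIV \<times> UNIV \<times> {1..}) (\<lambda>_. PiM ({..q1} \<times> {..q2}) (\<lambda>_. count_space UNIV)))))"
begin

abbreviation lags :: "(nat \<times> nat) set" where
  "lags \<equiv> {..q1} \<times> {..q2}"

abbreviation vecM :: "(nat \<times> nat \<Rightarrow> nat) measure" where
  "vecM \<equiv> PiM lags (\<lambda>_. count_space UNIV)"

abbreviation Zindex :: "(int \<times> int \<times> nat) set" where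
  "Zindex \<equiv> UNIV \<times> UNIV \<times> {1..}"

abbreviation Zv :: "int \<times> int \<times> nat \<Rightarrow> 'a \<Rightarrow> nat \<times> nat \<Rightarrow> nat" where
  "Zv \<equiv> Zvec q1 q2 Z"

definition binvecs :: "(nat \<times> nat \<Rightarrow> nat) set" where
  "binvecs = PiE lags (\<lambda>_. {0, 1})"

lemma finite_binvecs: "finite binvecs"
  unfolding binvecs_def by (intro finite_PiE) auto

lemma eps_measurable[measurable]: "eps a \<in> M \<rightarrow>\<^sub>M count_space UNIV"
  using eps_indep unfolding indep_vars_def2 by (cases a) auto

lemma Zv_measurable: "j \<in> Zindex \<Longrightarrow> Zv j \<in> M \<rightarrow>\<^sub>M vecM"
  using Z_indep unfolding indep_vars_def2 by auto

lemma Zv_in_binvecs: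
  assumes "\<omega> \<in> space M"
  shows "Zv j \<omega> \<in> binvecs"
proof -
  have "Z j ij \<omega> \<in> {0, 1}" for ij
    using Z_01[OF assms, of j ij] by auto
  then show ?thesis
    by (simp add: binvecs_def Zvec_def)
qed

lemma Zv_eq_empty_if_not_binvecs: "z \<notin> binvecs \<Longrightarrow> {\<omega> \<in> space M. Zv j \<omega> = z} = {}"
  using Zv_in_binvecs by blast

lemma Zv_in_space: "Zv j \<omega> \<in> space vecM"
  unfolding Zvec_def space_PiM by auto

lemma singleton_in_sets_vecM:
  assumes "z \<in> space vecM"
  shows "{z} \<in> sets vecM"
proof -
  from assms have "PiE lags (\<lambda>i. {z i}) = {z}"
    by (intro PiE_singleton) (simp add: space_PiM PiE_def)
  moreover have "PiE lags (\<lambda>i. {z i}) \<in> sets vecM"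
    by (intro sets_PiM_I_finite) auto
  ultimately show ?thesis
    by simp
qed

lemma Zv_eq_empty_if_not_space: "z \<notin> space vecM \<Longrightarrow> {\<omega> \<in> space M. Zv j \<omega> = z} = {}"
  using Zv_in_space by blast

lemma sets_Zv_eq:
  assumes "j \<in> Zindex"
  shows "{\<omega> \<in> space M. Zv j \<omega> = z} \<in> sets M"
proof (cases "z \<in> space vecM")
  case True
  from measurable_sets[OF Zv_measurable[OF assms] singleton_in_sets_vecM[OF True]]
  show ?thesis
    by (simp add: vimage_def Int_def conj_commute)
qed (simp add: Zv_eq_empty_if_not_space)

definition Z_law :: "(nat \<times> nat \<Rightarrow> nat) pmf" where
  "Z_law = embed_pmf (\<lambda>z. prob {\<omega> \<in> space M. Zv (0, 0, 1) \<omega> = z})"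

lemma prob_Zv_in_eq_sum:
  assumes "j \<in> Zindex"
  shows "prob {\<omega> \<in> space M. Zv j \<omega> \<in> A} = (\<Sum>z\<in>A \<inter> binvecs. prob {\<omega> \<in> space M. Zv j \<omega> = z})"
proof -
  have "{\<omega> \<in> space M. Zv j \<omega> \<in> A} = (\<Union>z\<in>A \<inter> binvecs. {\<omega> \<in> space M. Zv j \<omega> = z})"
    using Zv_in_binvecs by blast
  also have "prob \<dots> = (\<Sum>z\<in>A \<inter> binvecs. prob {\<omega> \<in> space M. Zv j \<omega> = z})"
    using finite_binvecs sets_Zv_eq[OF assms]
    by (intro finite_measure_finite_Union) (auto simp: disjoint_family_on_def)
  finally show ?thesis .
qed

lemma pmf_Z_law: "pmf Z_law z = prob {\<omega> \<in> space M. Zv (0, 0, 1) \<omega> = z}"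
  unfolding Z_law_def
proof (rule pmf_embed_pmf)
  have "(\<integral>\<^sup>+ z. ennreal (prob {\<omega> \<in> space M. Zv (0, 0, 1) \<omega> = z}) \<partial>count_space UNIV)
      = (\<Sum>z\<in>binvecs. ennreal (prob {\<omega> \<in> space M. Zv (0, 0, 1) \<omega> = z}))"
    by (intro nn_integral_count_space'[OF finite_binvecs]) (auto simp: Zv_eq_empty_if_not_binvecs)
  also have "\<dots> = ennreal (prob {\<omega> \<in> space M. Zv (0, 0, 1) \<omega> \<in> UNIV})"
    by (subst prob_Zv_in_eq_sum) (auto simp: sum_ennreal)
  finally show "(\<integral>\<^sup>+ z. ennreal (prob {\<omega> \<in> space M. Zv (0, 0, 1) \<omega> = z}) \<partial>count_space UNIV) = 1"
    by (simp add: prob_space)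
qed simp

lemma set_pmf_Z_law: "set_pmf Z_law \<subseteq> binvecs"
proof
  fix z
  assume "z \<in> set_pmf Z_law"
  then have "prob {\<omega> \<in> space M. Zv (0, 0, 1) \<omega> = z} \<noteq> 0"
    by (simp add: set_pmf_eq pmf_Z_law)
  then have "{\<omega> \<in> space M. Zv (0, 0, 1) \<omega> = z} \<noteq> {}"
    by (metis measure_empty)
  then show "z \<in> binvecs"
    using Zv_eq_empty_if_not_binvecs by blast
qed

lemma prob_Z_law: "measure_pmf.prob Z_law A = prob {\<omega> \<in> space M. Zv (0, 0, 1) \<omega> \<in> A}"
proof -
  have "A \<inter> binvecs \<inter> set_pmf Z_law = A \<inter> set_pmf Z_law"
    using set_pmf_Z_law by blast
  then have "measure_pmf.prob Z_law A = measure_pmf.prob Z_law (A \<inter> binvecs)"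
    by (metis measure_Int_set_pmf)
  also have "\<dots> = prob {\<omega> \<in> space M. Zv (0, 0, 1) \<omega> \<in> A}"
    using finite_binvecs by (simp add: measure_measure_pmf_finite prob_Zv_in_eq_sum pmf_Z_law)
  finally show ?thesis .
qed

lemma prob_Zv_eq:
  assumes "j \<in> Zindex"
  shows "prob {\<omega> \<in> space M. Zv j \<omega> = z} = pmf Z_law z"
proof (cases "z \<in> space vecM")
  case True
  obtain s' t' r where j: "j = (s', t', r)" and "r \<ge> 1"
    using assms by auto
  have law: "prob {\<omega> \<in> space M. Zv i \<omega> = z} = measure (distr M vecM (Zv i)) {z}" if "i \<in> Zindex" for i
    using measure_distr[OF Zv_measurable[OF that] singleton_in_sets_vecM[OF True]]
    by (simp add: vimage_def Int_def conj_commute)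
  have "prob {\<omega> \<in> space M. Zv j \<omega> = z} = measure (distr M vecM (Zv j)) {z}"
    by (rule law[OF assms])
  also have "\<dots> = measure (distr M vecM (Zv (0, 0, 1))) {z}"
    using Z_ident[OF \<open>r \<ge> 1\<close>] by (simp add: j)
  also have "\<dots> = pmf Z_law z"
    by (simp add: law[symmetric] pmf_Z_law)
  finally show ?thesis .
qed (simp add: Zv_eq_empty_if_not_space pmf_Z_law)

lemma prob_eps_eq: "prob {\<omega> \<in> space M. eps a \<omega> = k} = pmf (poisson_pmf \<mu>) k"
proof -
  have "prob {\<omega> \<in> space M. eps a \<omega> = k} = measure (distr M (count_space UNIV) (eps a)) {k}"
    by (subst measure_distr) (auto simp: vimage_def Int_def conj_commute)
  then show ?thesis
    by (simp add: eps_poisson measure_pmf_single)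
qed

lemma eps_eq_in_generated: "{\<omega> \<in> space M. eps a \<omega> = k} \<in> {eps a -` A \<inter> space M |A. A \<in> sets (count_space UNIV)}"
  by (auto intro!: exI[of _ "{k}"])

lemma Zv_eq_in_generated: "{\<omega> \<in> space M. Zv j \<omega> = z} \<in> {Zv j -` A \<inter> space M |A. A \<in> sets vecM}"
proof (cases "z \<in> space vecM")
  case True
  then show ?thesis
    by (auto intro!: exI[of _ "{z}"] singleton_in_sets_vecM)
next
  case False
  then show ?thesis
    by (auto simp: Zv_eq_empty_if_not_space intro!: exI[of _ "{}"])
qed

lemma prob_eps_eq_all:
  assumes "finite Pos"
  shows "prob {\<omega> \<in> space M. \<forall>a\<in>Pos. eps a \<omega> = n a} = (\<Prod>a\<in>Pos. pmf (poisson_pmf \<mu>) (n a))"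
proof (cases "Pos = {}")
  case False
  have "indep_sets (\<lambda>a. {eps a -` A \<inter> space M |A. A \<in> sets (count_space UNIV)}) UNIV"
    using eps_indep unfolding indep_vars_def2 by (rule conjunct2)
  from indep_setsD[OF this _ False assms, of "\<lambda>a. {\<omega> \<in> space M. eps a \<omega> = n a}"]
  have "prob (\<Inter>a\<in>Pos. {\<omega> \<in> space M. eps a \<omega> = n a}) = (\<Prod>a\<in>Pos. prob {\<omega> \<in> space M. eps a \<omega> = n a})"
    using eps_eq_in_generated by blast
  moreover have "(\<Inter>a\<in>Pos. {\<omega> \<in> space M. eps a \<omega> = n a}) = {\<omega> \<in> space M. \<forall>a\<in>Pos. eps a \<omega> = n a}"
    using False by auto
  ultimately show ?thesis
    by (simp add: prob_eps_eq)
qed (simp add: prob_space)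

lemma prob_Zv_eq_all:
  assumes "finite J" and "J \<subseteq> Zindex"
  shows "prob {\<omega> \<in> space M. \<forall>j\<in>J. Zv j \<omega> = z j} = (\<Prod>j\<in>J. pmf Z_law (z j))"
proof (cases "J = {}")
  case False
  have "indep_sets (\<lambda>j. {Zv j -` A \<inter> space M |A. A \<in> sets vecM}) Zindex"
    using Z_indep unfolding indep_vars_def2 by (rule conjunct2)
  from indep_setsD[OF this assms(2) False assms(1), of "\<lambda>j. {\<omega> \<in> space M. Zv j \<omega> = z j}"]
  have "prob (\<Inter>j\<in>J. {\<omega> \<in> space M. Zv j \<omega> = z j}) = (\<Prod>j\<in>J. prob {\<omega> \<in> space M. Zv j \<omega> = z j})"
    using Zv_eq_in_generated by blast
  moreover have "(\<Inter>j\<in>J. {\<omega> \<in> space M. Zv j \<omega> = z j}) = {\<omega> \<in> space M. \<forall>j\<in>J. Zv j \<omega> = z j}"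
    using False by auto
  moreover have "prob {\<omega> \<in> space M. Zv j \<omega> = z j} = pmf Z_law (z j)" if "j \<in> J" for j
    using that assms(2) by (intro prob_Zv_eq) auto
  ultimately show ?thesis
    by simp
qed (simp add: prob_space)

lemma eps_eq_all_in_vimage_algebra:
  assumes "finite Pos"
  shows "{\<omega> \<in> space M. \<forall>a\<in>Pos. eps a \<omega> = n a}
           \<in> sets (vimage_algebra (space M) (\<lambda>\<omega> st. eps st \<omega>) (PiM UNIV (\<lambda>_. count_space UNIV)))"
proof -
  let ?P = "PiM UNIV (\<lambda>_ :: int \<times> int. count_space (UNIV :: nat set))"
  have "{f \<in> space ?P. \<forall>a\<in>Pos. f a = n a} \<in> sets ?P"
    using assms by measurable
  from in_vimage_algebra[OF this, of "\<lambda>\<omega> st. eps st \<omega>" "space M"] show ?thesis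
    by (simp add: space_PiM vimage_def Int_def conj_commute)
qed

lemma Zv_eq_all_in_vimage_algebra:
  assumes "finite J" and "J \<subseteq> Zindex"
  shows "{\<omega> \<in> space M. \<forall>j\<in>J. Zv j \<omega> = z j}
           \<in> sets (vimage_algebra (space M) (\<lambda>\<omega>. \<lambda>str\<in>Zindex. Zv str \<omega>) (PiM Zindex (\<lambda>_. vecM)))"
proof -
  let ?P = "PiM Zindex (\<lambda>_. vecM)"
  have "{g \<in> space ?P. \<forall>j\<in>J. g j = z j} \<in> sets ?P"
  proof (rule sets.sets_Collect_finite_All[OF _ assms(1)])
    fix j
    assume "j \<in> J"
    with assms(2) have j: "j \<in> Zindex"
      by auto
    show "{g \<in> space ?P. g j = z j} \<in> sets ?P"
    proof (cases "z j \<in> space vecM")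
      case True
      from measurable_sets[OF measurable_component_singleton[OF j] singleton_in_sets_vecM[OF True]]
      show ?thesis
        by (simp add: vimage_def Int_def conj_commute)
    next
      case False
      then have "{g \<in> space ?P. g j = z j} = {}"
        using measurable_space[OF measurable_component_singleton[OF j]] by force
      then show ?thesis
        by (metis sets.empty_sets)
    qed
  qed
  from in_vimage_algebra[OF this, of "\<lambda>\<omega>. \<lambda>str\<in>Zindex. Zv str \<omega>" "space M"]
  moreover have "(\<lambda>\<omega>. \<lambda>str\<in>Zindex. Zv str \<omega>) -` {g \<in> space ?P. \<forall>j\<in>J. g j = z j} \<inter> space M
      = {\<omega> \<in> space M. \<forall>j\<in>J. Zv j \<omega> = z j}"
    using assms(2) Zv_in_space by (auto simp: space_PiM)
  ultimately show ?thesis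
    by simp
qed

lemma prob_eps_Zv_eq_all:
  assumes "finite Pos"
  shows "prob {\<omega> \<in> space M. \<forall>a\<in>Pos. eps a \<omega> = n a \<and> (\<forall>r<n a. Zv (fst a, snd a, Suc r) \<omega> = \<zeta> a r)}
           = (\<Prod>a\<in>Pos. pmf (poisson_pmf \<mu>) (n a) * (\<Prod>r<n a. pmf Z_law (\<zeta> a r)))"
proof -
  define idx where "idx = (\<lambda>(a :: int \<times> int, r :: nat). (fst a, snd a, Suc r))"
  define J where "J = idx ` (SIGMA a:Pos. {..<n a})"
  define z where "z = (\<lambda>(x :: int, y :: int, r :: nat). \<zeta> (x, y) (r - 1))"
  have J: "finite J" "J \<subseteq> Zindex"
    using assms by (auto simp: J_def idx_def)
  have "{\<omega> \<in> space M. \<forall>a\<in>Pos. eps a \<omega> = n a \<and> (\<forall>r<n a. Zv (fst a, snd a, Suc r) \<omega> = \<zeta> a r)}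
      = {\<omega> \<in> space M. \<forall>a\<in>Pos. eps a \<omega> = n a} \<inter> {\<omega> \<in> space M. \<forall>j\<in>J. Zv j \<omega> = z j}"
    by (auto simp: J_def idx_def z_def)
  moreover have "prob ({\<omega> \<in> space M. \<forall>a\<in>Pos. eps a \<omega> = n a} \<inter> {\<omega> \<in> space M. \<forall>j\<in>J. Zv j \<omega> = z j})
      = prob {\<omega> \<in> space M. \<forall>a\<in>Pos. eps a \<omega> = n a} * prob {\<omega> \<in> space M. \<forall>j\<in>J. Zv j \<omega> = z j}"
    by (rule indep_setD[OF eps_Z_indep eps_eq_all_in_vimage_algebra[OF assms] Zv_eq_all_in_vimage_algebra[OF J]])
  moreover have "(\<Prod>j\<in>J. pmf Z_law (z j)) = (\<Prod>a\<in>Pos. \<Prod>r<n a. pmf Z_law (\<zeta> a r))"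
  proof -
    have "inj_on idx (SIGMA a:Pos. {..<n a})"
      by (auto simp: inj_on_def idx_def)
    then have "(\<Prod>j\<in>J. pmf Z_law (z j)) = (\<Prod>(a, r)\<in>(SIGMA a:Pos. {..<n a}). pmf Z_law (\<zeta> a r))"
      unfolding J_def by (subst prod.reindex) (auto simp: z_def idx_def intro!: prod.cong)
    also have "\<dots> = (\<Prod>a\<in>Pos. \<Prod>r<n a. pmf Z_law (\<zeta> a r))"
      using assms by (subst prod.Sigma) auto
    finally show ?thesis .
  qed
  ultimately show ?thesis
    using prob_eps_eq_all[OF assms] prob_Zv_eq_all[OF J] by (simp add: prod.distrib)
qed

text \<open>The restrictions make \<open>config Pos \<omega>\<close> depend on nothing but the innovation counts on
  \<open>Pos\<close> and the thinning vectors of the events they count.\<close>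
definition config :: "(int \<times> int) set \<Rightarrow> 'a \<Rightarrow> int \<times> int \<Rightarrow> nat \<times> (nat \<Rightarrow> nat \<times> nat \<Rightarrow> nat)" where
  "config Pos \<omega> = (\<lambda>a\<in>Pos. (eps a \<omega>, \<lambda>r\<in>{..<eps a \<omega>}. Zv (fst a, snd a, Suc r) \<omega>))"

definition site_pmf :: "(nat \<times> (nat \<Rightarrow> nat \<times> nat \<Rightarrow> nat)) pmf" where
  "site_pmf = bind_pmf (poisson_pmf \<mu>) (\<lambda>n. map_pmf (Pair n) (Pi_pmf {..<n} undefined (\<lambda>_. Z_law)))"

definition config_pmf :: "(int \<times> int) set \<Rightarrow> (int \<times> int \<Rightarrow> nat \<times> (nat \<Rightarrow> nat \<times> nat \<Rightarrow> nat)) pmf" where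
  "config_pmf Pos = Pi_pmf Pos undefined (\<lambda>_. site_pmf)"

definition config_wf :: "(int \<times> int) set \<Rightarrow> (int \<times> int \<Rightarrow> nat \<times> (nat \<Rightarrow> nat \<times> nat \<Rightarrow> nat)) \<Rightarrow> bool" where
  "config_wf Pos \<xi> \<longleftrightarrow> (\<forall>a. a \<notin> Pos \<longrightarrow> \<xi> a = undefined)
                        \<and> (\<forall>a\<in>Pos. \<forall>r. fst (\<xi> a) \<le> r \<longrightarrow> snd (\<xi> a) r = undefined)"

lemma config_wf_config: "config_wf Pos (config Pos \<omega>)"
  unfolding config_wf_def config_def by auto

lemma pmf_site_pmf:
  "pmf site_pmf (n, \<zeta>) = (if \<forall>r. n \<le> r \<longrightarrow> \<zeta> r = undefined
     then pmf (poisson_pmf \<mu>) n * (\<Prod>r<n. pmf Z_law (\<zeta> r)) else 0)"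
proof -
  have "pmf (map_pmf (Pair k) X) (n, \<zeta>) = (if k = n then pmf X \<zeta> else 0)" for k and X :: "(nat \<Rightarrow> nat \<times> nat \<Rightarrow> nat) pmf"
  proof (cases "k = n")
    case True
    have "inj (Pair n)"
      by (auto simp: inj_def)
    from pmf_map_inj'[OF this, of X \<zeta>] True show ?thesis
      by simp
  qed (auto intro!: pmf_map_outside)
  then have "pmf site_pmf (n, \<zeta>) = pmf (poisson_pmf \<mu>) n * pmf (Pi_pmf {..<n} undefined (\<lambda>_. Z_law)) \<zeta>"
    unfolding site_pmf_def pmf_bind by (subst integral_measure_pmf[of "{n}"]) (auto split: if_splits)
  then show ?thesis
    by (auto simp: pmf_Pi not_less)
qed

lemma pmf_config_pmf:
  assumes "finite Pos"
  shows "pmf (config_pmf Pos) \<xi> = (if config_wf Pos \<xi>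
           then (\<Prod>a\<in>Pos. pmf (poisson_pmf \<mu>) (fst (\<xi> a)) * (\<Prod>r<fst (\<xi> a). pmf Z_law (snd (\<xi> a) r)))
           else 0)"
proof (cases "\<forall>a. a \<notin> Pos \<longrightarrow> \<xi> a = undefined")
  case True
  then have "pmf (config_pmf Pos) \<xi> = (\<Prod>a\<in>Pos. pmf site_pmf (fst (\<xi> a), snd (\<xi> a)))"
    using assms by (simp add: config_pmf_def pmf_Pi)
  also have "\<dots> = (if config_wf Pos \<xi>
           then (\<Prod>a\<in>Pos. pmf (poisson_pmf \<mu>) (fst (\<xi> a)) * (\<Prod>r<fst (\<xi> a). pmf Z_law (snd (\<xi> a) r)))
           else 0)"
    unfolding pmf_site_pmf using True assms by (auto simp: config_wf_def)
  finally show ?thesis .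
qed (auto simp: config_pmf_def config_wf_def pmf_Pi_outside[OF assms])

lemma restrict_lessThan_eq_iff:
  fixes n :: nat
  assumes "\<forall>r. n \<le> r \<longrightarrow> \<zeta> r = undefined"
  shows "restrict f {..<n} = \<zeta> \<longleftrightarrow> (\<forall>r<n. f r = \<zeta> r)"
  using assms by (auto simp: fun_eq_iff not_less)

lemma config_eq_iff:
  assumes wf: "config_wf Pos \<xi>"
  shows "config Pos \<omega> = \<xi> \<longleftrightarrow>
           (\<forall>a\<in>Pos. eps a \<omega> = fst (\<xi> a) \<and> (\<forall>r<fst (\<xi> a). Zv (fst a, snd a, Suc r) \<omega> = snd (\<xi> a) r))"
proof -
  have "config Pos \<omega> = \<xi> \<longleftrightarrow> (\<forall>a\<in>Pos. config Pos \<omega> a = \<xi> a)"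
    using wf by (auto simp: config_def config_wf_def fun_eq_iff)
  also have "\<dots> \<longleftrightarrow> (\<forall>a\<in>Pos. eps a \<omega> = fst (\<xi> a) \<and> (\<forall>r<fst (\<xi> a). Zv (fst a, snd a, Suc r) \<omega> = snd (\<xi> a) r))"
  proof (intro ball_cong refl)
    fix a
    assume "a \<in> Pos"
    moreover from this wf have "\<forall>r. fst (\<xi> a) \<le> r \<longrightarrow> snd (\<xi> a) r = undefined"
      by (simp add: config_wf_def)
    ultimately show "config Pos \<omega> a = \<xi> a \<longleftrightarrow>
        eps a \<omega> = fst (\<xi> a) \<and> (\<forall>r<fst (\<xi> a). Zv (fst a, snd a, Suc r) \<omega> = snd (\<xi> a) r)"
      by (cases "eps a \<omega> = fst (\<xi> a)") (simp_all add: config_def prod_eq_iff restrict_lessThan_eq_iff)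
  qed
  finally show ?thesis .
qed

lemma config_eq_set:
  assumes "config_wf Pos \<xi>"
  shows "{\<omega> \<in> space M. config Pos \<omega> = \<xi>} = {\<omega> \<in> space M. \<forall>a\<in>Pos.
           eps a \<omega> = fst (\<xi> a) \<and> (\<forall>r<fst (\<xi> a). Zv (fst a, snd a, Suc r) \<omega> = snd (\<xi> a) r)}"
  using config_eq_iff[OF assms] by blast

lemma config_eq_empty: "\<not> config_wf Pos \<xi> \<Longrightarrow> {\<omega> \<in> space M. config Pos \<omega> = \<xi>} = {}"
  using config_wf_config by blast

lemma sets_config_eq:
  assumes "finite Pos"
  shows "{\<omega> \<in> space M. config Pos \<omega> = \<xi>} \<in> sets M"
proof (cases "config_wf Pos \<xi>")
  case True
  have "{\<omega> \<in> space M. eps a \<omega> = k \<and> (\<forall>r<k. Zv (fst a, snd a, Suc r) \<omega> = \<zeta> r)} \<in> sets M" for a k \<zeta>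
  proof (rule sets.sets_Collect_conj)
    have "{\<omega> \<in> space M. \<forall>r\<in>{..<k}. Zv (fst a, snd a, Suc r) \<omega> = \<zeta> r} \<in> sets M"
      by (rule sets.sets_Collect_finite_All) (auto intro: sets_Zv_eq)
    then show "{\<omega> \<in> space M. \<forall>r<k. Zv (fst a, snd a, Suc r) \<omega> = \<zeta> r} \<in> sets M"
      by (simp only: lessThan_iff Ball_def)
  qed measurable
  then show ?thesis
    unfolding config_eq_set[OF True] by (rule sets.sets_Collect_finite_All[OF _ assms])
qed (simp add: config_eq_empty)

lemma prob_config_eq:
  assumes "finite Pos"
  shows "prob {\<omega> \<in> space M. config Pos \<omega> = \<xi>} = pmf (config_pmf Pos) \<xi>"
proof (cases "config_wf Pos \<xi>")
  case True
  then show ?thesis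
    unfolding config_eq_set[OF True] pmf_config_pmf[OF assms] by (simp add: prob_eps_Zv_eq_all[OF assms])
qed (simp add: config_eq_empty pmf_config_pmf[OF assms])

definition config_space :: "(int \<times> int) set \<Rightarrow> (int \<times> int \<Rightarrow> nat \<times> (nat \<Rightarrow> nat \<times> nat \<Rightarrow> nat)) set" where
  "config_space Pos = PiE Pos (\<lambda>_. SIGMA n:UNIV. PiE {..<n} (\<lambda>_. binvecs))"

lemma countable_config_space:
  assumes "finite Pos"
  shows "countable (config_space Pos)"
proof -
  have "countable (PiE {..<n} (\<lambda>_. binvecs))" for n :: nat
    using finite_binvecs by (intro countable_finite finite_PiE) auto
  then show ?thesis
    unfolding config_space_def by (intro countable_PiE[OF assms] countable_SIGMA) auto
qed

lemma config_in_config_space: "\<omega> \<in> space M \<Longrightarrow> config Pos \<omega> \<in> config_space Pos"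
  using Zv_in_binvecs by (auto simp: config_space_def config_def)

lemma set_pmf_config_pmf:
  assumes "finite Pos"
  shows "set_pmf (config_pmf Pos) \<subseteq> config_space Pos"
proof
  fix \<xi>
  assume "\<xi> \<in> set_pmf (config_pmf Pos)"
  then have "prob {\<omega> \<in> space M. config Pos \<omega> = \<xi>} \<noteq> 0"
    by (simp add: set_pmf_eq prob_config_eq[OF assms])
  then obtain \<omega> where "\<omega> \<in> space M" "config Pos \<omega> = \<xi>"
    by (metis (mono_tags, lifting) Collect_empty_eq measure_empty)
  then show "\<xi> \<in> config_space Pos"
    using config_in_config_space by blast
qed

lemma prob_config_in:
  assumes "finite Pos"
  shows "prob {\<omega> \<in> space M. config Pos \<omega> \<in> E} = measure_pmf.prob (config_pmf Pos) E"
proof -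
  let ?C = "config_space Pos"
  have "{\<omega> \<in> space M. config Pos \<omega> \<in> E} = (\<Union>\<xi>\<in>E \<inter> ?C. {\<omega> \<in> space M. config Pos \<omega> = \<xi>})"
    using config_in_config_space by auto
  then have "emeasure M {\<omega> \<in> space M. config Pos \<omega> \<in> E}
      = (\<integral>\<^sup>+ \<xi>. emeasure M {\<omega> \<in> space M. config Pos \<omega> = \<xi>} \<partial>count_space (E \<inter> ?C))"
    using countable_config_space[OF assms] sets_config_eq[OF assms]
    by (simp only:) (intro emeasure_UN_countable countable_Int2, auto simp: disjoint_family_on_def)
  also have "\<dots> = (\<integral>\<^sup>+ \<xi>. pmf (config_pmf Pos) \<xi> \<partial>count_space (E \<inter> ?C))"
    by (simp add: emeasure_eq_measure prob_config_eq[OF assms])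
  also have "\<dots> = emeasure (config_pmf Pos) (E \<inter> ?C)"
    by (rule nn_integral_pmf)
  also have "\<dots> = emeasure (config_pmf Pos) E"
    using set_pmf_config_pmf[OF assms]
    by (metis emeasure_Int_set_pmf inf.absorb_iff2 inf_assoc)
  finally show ?thesis
    by (simp add: emeasure_eq_measure measure_pmf.emeasure_eq_measure)
qed

definition site_sum :: "(int \<times> int) set \<Rightarrow> (int \<times> int \<Rightarrow> (nat \<times> nat \<Rightarrow> nat) \<Rightarrow> 'b::comm_monoid_add) \<Rightarrow> 'a \<Rightarrow> 'b" where
  "site_sum Pos g \<omega> = (\<Sum>a\<in>Pos. \<Sum>r<eps a \<omega>. g a (Zv (fst a, snd a, Suc r) \<omega>))"

lemma site_sum_eq_config: "site_sum Pos g \<omega> = (\<Sum>a\<in>Pos. \<Sum>r<fst (config Pos \<omega> a). g a (snd (config Pos \<omega> a) r))"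
  unfolding site_sum_def config_def by (auto intro!: sum.cong)

lemma site_sum_add: "site_sum Pos (\<lambda>a z. f a z + g a z) \<omega> = site_sum Pos f \<omega> + site_sum Pos g \<omega>"
  by (simp add: site_sum_def sum.distrib)

lemma fst_site_sum: "fst (site_sum Pos w \<omega>) = site_sum Pos (\<lambda>a z. fst (w a z)) \<omega>"
  by (simp add: site_sum_def fst_sum)

lemma snd_site_sum: "snd (site_sum Pos w \<omega>) = site_sum Pos (\<lambda>a z. snd (w a z)) \<omega>"
  by (simp add: site_sum_def snd_sum)

lemma map_pmf_sum_config_pmf:
  assumes "finite Pos"
    and w: "\<And>a z. a \<in> Pos \<Longrightarrow> z \<in> binvecs \<Longrightarrow> w a z \<in> {(0, 0), (1, 0), (0, 1)}"
  shows "map_pmf (\<lambda>\<xi>. \<Sum>a\<in>Pos. \<Sum>r<fst (\<xi> a). w a (snd (\<xi> a) r)) (config_pmf Pos)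
           = pair_pmf (pois_pmf (\<Sum>a\<in>Pos. \<mu> * pmf (map_pmf (w a) Z_law) (1, 0)))
                      (pois_pmf (\<Sum>a\<in>Pos. \<mu> * pmf (map_pmf (w a) Z_law) (0, 1)))"
  unfolding config_pmf_def
proof (rule map_sum_Pi_pmf_pair_pois_pmf[OF assms(1)])
  fix a
  assume "a \<in> Pos"
  have supp: "set_pmf (map_pmf (w a) Z_law) \<subseteq> {(0, 0), (1, 0), (0, 1)}"
  proof
    fix c
    assume "c \<in> set_pmf (map_pmf (w a) Z_law)"
    then obtain z where "z \<in> set_pmf Z_law" "c = w a z"
      by auto
    with set_pmf_Z_law w[OF \<open>a \<in> Pos\<close>] show "c \<in> {(0, 0), (1, 0), (0, 1)}"
      by blast
  qed
  have "map_pmf (\<lambda>x. \<Sum>r<fst x. w a (snd x r)) site_pmf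
      = bind_pmf (poisson_pmf \<mu>) (\<lambda>n. map_pmf (\<lambda>\<zeta>. \<Sum>r<n. (w a \<circ> \<zeta>) r) (Pi_pmf {..<n} undefined (\<lambda>_. Z_law)))"
    unfolding site_pmf_def map_bind_pmf map_pmf_comp by simp
  also have "\<dots> = bind_pmf (poisson_pmf \<mu>)
      (\<lambda>n. map_pmf (\<lambda>\<zeta>. \<Sum>r<n. \<zeta> r) (Pi_pmf {..<n} (w a undefined) (\<lambda>_. map_pmf (w a) Z_law)))"
    by (simp add: Pi_pmf_map map_pmf_comp)
  also have "\<dots> = pair_pmf (pois_pmf (\<mu> * pmf (map_pmf (w a) Z_law) (1, 0))) (pois_pmf (\<mu> * pmf (map_pmf (w a) Z_law) (0, 1)))"
    by (rule poisson_thinning[OF supp mu_pos])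
  finally show "map_pmf (\<lambda>x. \<Sum>r<fst x. w a (snd x r)) site_pmf = \<dots>" .
qed (use mu_pos in simp)

lemma prob_site_sum_in:
  assumes "finite Pos"
    and "\<And>a z. a \<in> Pos \<Longrightarrow> z \<in> binvecs \<Longrightarrow> w a z \<in> {(0, 0), (1, 0), (0, 1)}"
  shows "prob {\<omega> \<in> space M. site_sum Pos w \<omega> \<in> S}
           = measure_pmf.prob (pair_pmf (pois_pmf (\<Sum>a\<in>Pos. \<mu> * pmf (map_pmf (w a) Z_law) (1, 0)))
                                        (pois_pmf (\<Sum>a\<in>Pos. \<mu> * pmf (map_pmf (w a) Z_law) (0, 1)))) S"
proof -
  define G where "G \<xi> = (\<Sum>a\<in>Pos. \<Sum>r<fst (\<xi> a). w a (snd (\<xi> a) r))" for \<xi> :: "int \<times> int \<Rightarrow> nat \<times> (nat \<Rightarrow> nat \<times> nat \<Rightarrow> nat)"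
  have "{\<omega> \<in> space M. site_sum Pos w \<omega> \<in> S} = {\<omega> \<in> space M. config Pos \<omega> \<in> G -` S}"
    by (simp add: site_sum_eq_config G_def)
  then have "prob {\<omega> \<in> space M. site_sum Pos w \<omega> \<in> S} = measure_pmf.prob (config_pmf Pos) (G -` S)"
    by (simp only: prob_config_in[OF assms(1)])
  also have "\<dots> = measure_pmf.prob (map_pmf G (config_pmf Pos)) S"
    by (rule measure_map_pmf[symmetric])
  also have "map_pmf G (config_pmf Pos) = pair_pmf (pois_pmf (\<Sum>a\<in>Pos. \<mu> * pmf (map_pmf (w a) Z_law) (1, 0)))
                                        (pois_pmf (\<Sum>a\<in>Pos. \<mu> * pmf (map_pmf (w a) Z_law) (0, 1)))"
    unfolding G_def by (rule map_pmf_sum_config_pmf[OF assms])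
  finally show ?thesis .
qed

lemma window_weight_le_1:
  assumes "z \<in> binvecs"
  shows "window_weight q1 q2 c a z \<le> 1"
proof (cases "a \<in> window q1 q2 c")
  case True
  then have "(nat (fst c - fst a), nat (snd c - snd a)) \<in> lags"
    by (auto simp: mem_window_iff nat_le_iff)
  from PiE_mem[OF assms[unfolded binvecs_def] this] True show ?thesis
    by (auto simp: window_weight_def)
qed (simp add: window_weight_def)

lemma inma_X_eq_site_sum:
  assumes "finite Pos" "window q1 q2 (s, t) \<subseteq> Pos"
  shows "inma_X q1 q2 eps Z s t \<omega> = site_sum Pos (window_weight q1 q2 (s, t)) \<omega>"
proof -
  have "site_sum Pos (window_weight q1 q2 (s, t)) \<omega>
      = (\<Sum>(i, j)\<in>lags. \<Sum>r<eps (s - int i, t - int j) \<omega>. Z (s - int i, t - int j, Suc r) (i, j) \<omega>)"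
    unfolding site_sum_def using assms
    by (subst sum_window_weight[where h = "\<lambda>a F. \<Sum>r<eps a \<omega>. F (Zv (fst a, snd a, Suc r) \<omega>)"])
      (auto simp: Zvec_def intro!: sum.cong)
  then show ?thesis
    by (simp add: inma_X_def sum.cartesian_product sum.atLeast1_atMost_eq)
qed

lemma sum_prob_window_weight:
  assumes "finite Pos" "window q1 q2 c \<subseteq> Pos"
  shows "(\<Sum>a\<in>Pos. measure_pmf.prob Z_law {z. window_weight q1 q2 c a z = 1})
           = (\<Sum>(i, j)\<in>lags. prob {\<omega> \<in> space M. Z (0, 0, 1) (i, j) \<omega> = 1})"
  using assms
  by (subst sum_window_weight[where h = "\<lambda>a F. measure_pmf.prob Z_law {z. F z = 1}"])
    (auto simp: prob_Z_law Zvec_def intro!: sum.cong)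

lemma sum_prob_window_weight_overlap:
  assumes "finite Pos" "window q1 q2 c \<subseteq> Pos"
  shows "(\<Sum>a\<in>Pos. measure_pmf.prob Z_law
            {z. window_weight q1 q2 c a z = 1 \<and> window_weight q1 q2 (fst c - int k, snd c - int l) a z = 1})
           = (\<Sum>i\<in>{k..q1}. \<Sum>j\<in>{l..q2}. inma_p M Z (i, j) (i - k, j - l))"
proof -
  have "(\<Sum>a\<in>Pos. measure_pmf.prob Z_law
            {z. window_weight q1 q2 c a z = 1 \<and> window_weight q1 q2 (fst c - int k, snd c - int l) a z = 1})
      = (\<Sum>(i, j)\<in>lags. if k \<le> i \<and> l \<le> j then inma_p M Z (i, j) (i - k, j - l) else 0)"
    using assms
    by (subst sum_window_weight[where h = "\<lambda>a F. measure_pmf.prob Z_law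
          {z. F z = 1 \<and> window_weight q1 q2 (fst c - int k, snd c - int l) a z = 1}"])
      (auto simp: window_weight_shift prob_Z_law Zvec_def inma_p_def le_trans[OF diff_le_self] intro!: sum.cong)
  also have "\<dots> = (\<Sum>(i, j)\<in>{k..q1} \<times> {l..q2}. inma_p M Z (i, j) (i - k, j - l))"
    by (rule sum.mono_neutral_cong_right) (auto split: if_splits)
  finally show ?thesis
    by (simp add: sum.cartesian_product)
qed

text \<open>\<open>\<mu> \<beta>\<^sub>\<bullet> (1 - \<rho>(k, l))\<close>: the mean number of thinned events that count towards
  \<open>X\<^sub>s\<^sub>,\<^sub>t\<close> but not towards \<open>X\<^sub>s\<^sub>-\<^sub>k\<^sub>,\<^sub>t\<^sub>-\<^sub>l\<close>, and vice versa.\<close>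
definition lag_rate :: "nat \<Rightarrow> nat \<Rightarrow> real" where
  "lag_rate k l = \<mu> * ((\<Sum>(i, j)\<in>lags. prob {\<omega> \<in> space M. Z (0, 0, 1) (i, j) \<omega> = 1})
                        - (\<Sum>i\<in>{k..q1}. \<Sum>j\<in>{l..q2}. inma_p M Z (i, j) (i - k, j - l)))"

text \<open>\<open>w a z\<close> records whether an event at site \<open>a\<close> with thinning vector \<open>z\<close> counts towards
  \<open>X\<^sub>s\<^sub>,\<^sub>t\<close> only or towards \<open>X\<^sub>s\<^sub>-\<^sub>k\<^sub>,\<^sub>t\<^sub>-\<^sub>l\<close> only; events counting towards both cancel in the
  difference.\<close>
lemma lagged_excess_law:
  fixes s t :: int and k l :: nat
  defines "Pos \<equiv> window q1 q2 (s, t) \<union> window q1 q2 (s - int k, t - int l)"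
    and "U \<equiv> window_weight q1 q2 (s, t)" and "V \<equiv> window_weight q1 q2 (s - int k, t - int l)"
  defines "w \<equiv> \<lambda>a z. (U a z - min (U a z) (V a z), V a z - min (U a z) (V a z))"
  shows "prob {\<omega> \<in> space M. site_sum Pos w \<omega> \<in> S}
           = measure_pmf.prob (pair_pmf (pois_pmf (lag_rate k l)) (pois_pmf (lag_rate k l))) S"
    and "0 \<le> lag_rate k l"
proof -
  have Pos: "finite Pos" "window q1 q2 (s, t) \<subseteq> Pos" "window q1 q2 (s - int k, t - int l) \<subseteq> Pos"
    by (auto simp: Pos_def finite_window)
  have binary: "U a z \<le> 1" "V a z \<le> 1" if "z \<in> binvecs" for a z
    using window_weight_le_1[OF that] by (simp_all add: U_def V_def)
  then have support: "U a z \<le> 1 \<and> V a z \<le> 1" if "z \<in> set_pmf Z_law" for a z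
    using set_pmf_Z_law that by blast
  have "pmf (map_pmf (w a) Z_law) (1, 0) = measure_pmf.prob Z_law {z. U a z = 1}
          - measure_pmf.prob Z_law {z. U a z = 1 \<and> V a z = 1}"
    and "pmf (map_pmf (w a) Z_law) (0, 1) = measure_pmf.prob Z_law {z. V a z = 1}
          - measure_pmf.prob Z_law {z. U a z = 1 \<and> V a z = 1}" for a
    unfolding w_def using pmf_map_excess_pair[where u = "U a" and v = "V a", OF support] by simp_all
  then have rates: "(\<Sum>a\<in>Pos. \<mu> * pmf (map_pmf (w a) Z_law) (1, 0)) = lag_rate k l"
    "(\<Sum>a\<in>Pos. \<mu> * pmf (map_pmf (w a) Z_law) (0, 1)) = lag_rate k l"
    using sum_prob_window_weight[OF Pos(1,2)] sum_prob_window_weight[OF Pos(1,3)]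
      sum_prob_window_weight_overlap[OF Pos(1,2), of k l]
    by (simp_all add: lag_rate_def U_def V_def sum_subtractf flip: sum_distrib_left)
  have "w a z \<in> {(0, 0), (1, 0), (0, 1)}" if "z \<in> binvecs" for a z
  proof -
    have "U a z \<in> {0, 1}" "V a z \<in> {0, 1}"
      using binary[OF that, of a] by auto
    then show ?thesis
      by (auto simp: w_def)
  qed
  with rates show "prob {\<omega> \<in> space M. site_sum Pos w \<omega> \<in> S}
      = measure_pmf.prob (pair_pmf (pois_pmf (lag_rate k l)) (pois_pmf (lag_rate k l))) S"
    using prob_site_sum_in[OF Pos(1)] by simp
  show "0 \<le> lag_rate k l"
    unfolding rates(1)[symmetric] using mu_pos by (simp add: sum_nonneg)
qed

lemma lagged_difference_distribution:
  fixes s t :: int and k l j :: nat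
  defines "X \<equiv> inma_X q1 q2 eps Z" and "m \<equiv> 2 * lag_rate k l"
  shows "prob {\<omega> \<in> space M. X s t \<omega> = X (s - int k) (t - int l) \<omega> + j} = exp (- m) * besselI j m"
    and "prob {\<omega> \<in> space M. X s t \<omega> + j = X (s - int k) (t - int l) \<omega>} = exp (- m) * besselI j m"
    and "prob {\<omega> \<in> space M. X s t \<omega> < X (s - int k) (t - int l) \<omega>} = (1 - exp (- m) * besselI 0 m) / 2"
    and "prob {\<omega> \<in> space M. X s t \<omega> > X (s - int k) (t - int l) \<omega>} = (1 - exp (- m) * besselI 0 m) / 2"
proof -
  define Pos where "Pos = window q1 q2 (s, t) \<union> window q1 q2 (s - int k, t - int l)"
  define U where "U = window_weight q1 q2 (s, t)"
  define V where "V = window_weight q1 q2 (s - int k, t - int l)"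
  define w where "w = (\<lambda>a z. (U a z - min (U a z) (V a z), V a z - min (U a z) (V a z)))"
  define C where "C = site_sum Pos (\<lambda>a z. min (U a z) (V a z))"
  have Pos: "finite Pos" "window q1 q2 (s, t) \<subseteq> Pos" "window q1 q2 (s - int k, t - int l) \<subseteq> Pos"
    by (auto simp: Pos_def finite_window)
  have U_eq: "(\<lambda>a z. fst (w a z) + min (U a z) (V a z)) = U"
    and V_eq: "(\<lambda>a z. snd (w a z) + min (U a z) (V a z)) = V"
    by (auto simp: w_def fun_eq_iff)
  have X_split: "X s t \<omega> = fst (site_sum Pos w \<omega>) + C \<omega>"
    "X (s - int k) (t - int l) \<omega> = snd (site_sum Pos w \<omega>) + C \<omega>" for \<omega>
    by (simp_all only: X_def inma_X_eq_site_sum[OF Pos(1,2)] inma_X_eq_site_sum[OF Pos(1,3)]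
        U_def[symmetric] V_def[symmetric] C_def fst_site_sum snd_site_sum site_sum_add[symmetric] U_eq V_eq)
  note law = lagged_excess_law(1)[where s = s and t = t and k = k and l = l,
      folded U_def V_def, folded Pos_def w_def]
  note skellam = prob_common_shock_skellam[OF X_split law lagged_excess_law(2), folded m_def]
  show "prob {\<omega> \<in> space M. X s t \<omega> = X (s - int k) (t - int l) \<omega> + j} = exp (- m) * besselI j m"
    by (rule skellam(1))
  show "prob {\<omega> \<in> space M. X s t \<omega> + j = X (s - int k) (t - int l) \<omega>} = exp (- m) * besselI j m"
    by (rule skellam(2))
  show "prob {\<omega> \<in> space M. X s t \<omega> < X (s - int k) (t - int l) \<omega>} = (1 - exp (- m) * besselI 0 m) / 2"
    by (rule skellam(3))
  show "prob {\<omega> \<in> space M. X s t \<omega> > X (s - int k) (t - int l) \<omega>} = (1 - exp (- m) * besselI 0 m) / 2"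
    by (rule skellam(4))
qed

end

lemma beta_bullet_pos:
  assumes "\<And>i j. i \<le> q1 \<Longrightarrow> j \<le> q2 \<Longrightarrow> 0 \<le> \<beta> i j" and "\<exists>i\<le>q1. \<exists>j\<le>q2. \<beta> i j \<noteq> 0"
  shows "0 < beta_bullet q1 q2 \<beta>"
proof -
  obtain i j where ij: "i \<le> q1" "j \<le> q2" "\<beta> i j \<noteq> 0"
    using assms(2) by blast
  have row: "0 < (\<Sum>j'\<le>q2. \<beta> i j')"
    by (rule sum_pos2[of _ j]) (use ij assms(1) in \<open>auto simp: order.strict_iff_order\<close>)
  show ?thesis
    unfolding beta_bullet_def
    by (rule sum_pos2[of _ i]) (use ij(1) row assms(1) in \<open>auto intro: sum_nonneg\<close>)
qed

theorem corollary1: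
  fixes M :: "'a measure"
    and q1 q2 :: nat
    and \<beta> :: "nat \<Rightarrow> nat \<Rightarrow> real"
    and \<mu> :: real
    and eps :: "int \<times> int \<Rightarrow> 'a \<Rightarrow> nat"
    and Z :: "int \<times> int \<times> nat \<Rightarrow> nat \<times> nat \<Rightarrow> 'a \<Rightarrow> nat"
    and k l :: nat and s t :: int
  assumes P: "prob_space M"
    and q: "q1 + q2 \<ge> 1"
    and beta_range: "\<And>i j. i \<le> q1 \<Longrightarrow> j \<le> q2 \<Longrightarrow> 0 \<le> \<beta> i j \<and> \<beta> i j \<le> 1"
    and beta_nz: "\<exists>i\<le>q1. \<exists>j\<le>q2. \<beta> i j \<noteq> 0"
    and mu_pos: "\<mu> > 0"
    and eps_indep: "prob_space.indep_vars M (\<lambda>_. count_space UNIV) eps UNIV"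
    and eps_poisson: "\<And>st. distr M (count_space UNIV) (eps st) = measure_pmf (poisson_pmf \<mu>)"
    and Z_01: "\<And>str ij \<omega>. \<omega> \<in> space M \<Longrightarrow> Z str ij \<omega> \<le> 1"
    and Z_indep: "prob_space.indep_vars M (\<lambda>_. PiM ({..q1} \<times> {..q2}) (\<lambda>_. count_space UNIV))
                    (Zvec q1 q2 Z) (UNIV \<times> UNIV \<times> {1..})"
    and Z_ident: "\<And>s' t' r. r \<ge> 1 \<Longrightarrow>
                    distr M (PiM ({..q1} \<times> {..q2}) (\<lambda>_. count_space UNIV)) (Zvec q1 q2 Z (s', t', r))
                  = distr M (PiM ({..q1} \<times> {..q2}) (\<lambda>_. count_space UNIV)) (Zvec q1 q2 Z (0, 0, 1))"
    and Z_bern: "\<And>i j. i \<le> q1 \<Longrightarrow> j \<le> q2 \<Longrightarrow>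
                    measure M {\<omega> \<in> space M. Z (0, 0, 1) (i, j) \<omega> = 1} = \<beta> i j"
    and eps_Z_indep: "prob_space.indep_set M
                    (sets (vimage_algebra (space M) (\<lambda>\<omega> st. eps st \<omega>)
                       (PiM UNIV (\<lambda>_. count_space UNIV))))
                    (sets (vimage_algebra (space M) (\<lambda>\<omega>. \<lambda>str\<in>UNIV \<times> UNIV \<times> {1..}. Zvec q1 q2 Z str \<omega>)
                       (PiM (UNIV \<times> UNIV \<times> {1..}) (\<lambda>_. PiM ({..q1} \<times> {..q2}) (\<lambda>_. count_space UNIV)))))"
    and kl: "k \<le> q1" "l \<le> q2"
  defines "X \<equiv> inma_X q1 q2 eps Z"
    and "m \<equiv> 2 * \<mu> * beta_bullet q1 q2 \<beta> * (1 - inma_rho M q1 q2 \<beta> Z k l)"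
  shows "(\<forall>j::nat.
            measure M {\<omega> \<in> space M. X s t \<omega> = X (s - int k) (t - int l) \<omega> + j} = exp (- m) * besselI j m
          \<and> measure M {\<omega> \<in> space M. X s t \<omega> + j = X (s - int k) (t - int l) \<omega>} = exp (- m) * besselI j m)
       \<and> measure M {\<omega> \<in> space M. X s t \<omega> < X (s - int k) (t - int l) \<omega>} = (1 - exp (- m) * besselI 0 m) / 2
       \<and> measure M {\<omega> \<in> space M. X s t \<omega> > X (s - int k) (t - int l) \<omega>} = (1 - exp (- m) * besselI 0 m) / 2"
proof -
  interpret inma_model M q1 q2 \<mu> eps Z
    by (intro inma_model.intro inma_model_axioms.intro P)
      (fact mu_pos eps_indep eps_poisson Z_01 Z_indep Z_ident eps_Z_indep)+
  have "(\<Sum>(i, j)\<in>{..q1} \<times> {..q2}. measure M {\<omega> \<in> space M. Z (0, 0, 1) (i, j) \<omega> = 1}) = beta_bullet q1 q2 \<beta>"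
    unfolding beta_bullet_def sum.cartesian_product[symmetric] using Z_bern by simp
  moreover have "beta_bullet q1 q2 \<beta> \<noteq> 0"
    using beta_bullet_pos[of q1 q2 \<beta>] beta_range beta_nz by force
  ultimately have "m = 2 * lag_rate k l"
    unfolding m_def lag_rate_def inma_rho_def by (simp add: field_simps)
  note distribution = lagged_difference_distribution[where s = s and t = t and k = k and l = l, folded X_def this]
  show ?thesis
    using distribution by blast
qed

end
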